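(* Let $B=\bigoplus_{i\in\mathbb{Z}}\mathbb{Z}_2$, let $m\ge1$, let $S_m$ be the set of $0/1$ sequences of length $m$, and let $\pi$ be any permutation of $S_m$. Define $\psi:B\to B$ by applying $\pi$ to the subsequence $(x_0,\dots,x_{m-1})$ of $x=(x_i)$ and leaving all other coordinates unchanged. Then $\psi$ is a bijection which is biLipschitz with respect to both $d_\ell$ and $d_u$, with biLipschitz constants at most $2^m$; i.e. $2^{-m}d(p,q)\le d(\psi(p),\psi(q))\le 2^m d(p,q)$ for all $p,q\in B$ and $d\in\{d_\ell,d_u\}$.
   Context: For distinct $p=(x_i),q=(y_i)\in B$: $d_\ell(p,q)=2^{-l_+}$ where $l_+$ is the smallest integer with $x_{l_+}\neq y_{l_+}$, and $d_u(p,q)=2^{l_-}$ where $l_-$ is the largest integer with $x_{l_-}\neq y_{l_-}$; $d_\ell(p,p)=d_u(p,p)=0$. (These are the metrics on the lower and upper boundaries of the Diestel–Leader graph $DL(2,2)$ restricted to $B$.) *)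

theory Defs
  imports Complex_Main "HOL-Combinatorics.Permutations"
begin

text \<open>The group B = direct sum over i in Z of Z_2, as finitely supported
  Z_2-valued (here: bool-valued) sequences indexed by the integers.\<close>
definition B :: "(int \<Rightarrow> bool) set" where
  "B = {x. finite {i. x i}}"

definition S :: "nat \<Rightarrow> bool list set" where
  "S m = {xs. length xs = m}"

definition psi :: "nat \<Rightarrow> (bool list \<Rightarrow> bool list) \<Rightarrow> (int \<Rightarrow> bool) \<Rightarrow> (int \<Rightarrow> bool)" where
  "psi m \<pi> x = (\<lambda>i. if 0 \<le> i \<and> i < int m
                      then (\<pi> (map (\<lambda>j. x (int j)) [0..<m])) ! nat i
                      else x i)"

definition d_l :: "(int \<Rightarrow> bool) \<Rightarrow> (int \<Rightarrow> bool) \<Rightarrow> real" where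
  "d_l p q = (if p = q then 0 else 2 powi (- Min {i. p i \<noteq> q i}))"

definition d_u :: "(int \<Rightarrow> bool) \<Rightarrow> (int \<Rightarrow> bool) \<Rightarrow> real" where
  "d_u p q = (if p = q then 0 else 2 powi (Max {i. p i \<noteq> q i}))"

end

theory Submission
  imports Defs
begin

text \<open>The map psi only changes coordinates in the window [0, m), and it is injective on the
  window. So the set of indices where psi p and psi q differ agrees with the set where p and q
  differ outside the window, and meets the window iff the latter does. Hence the smallest and
  the largest differing index move by at most m, which changes d_l and d_u by a factor of at
  most 2^m; as the situation is symmetric, this gives both Lipschitz bounds.\<close>

definition window_equiv :: "nat \<Rightarrow> int set \<Rightarrow> int set \<Rightarrow> bool" where
  "window_equiv m D E \<longleftrightarrow>
     (\<forall>i. i < 0 \<or> int m \<le> i \<longrightarrow> (i \<in> D \<longleftrightarrow> i \<in> E)) \<and>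
     (D \<inter> {0..<int m} = {} \<longleftrightarrow> E \<inter> {0..<int m} = {})"

lemma window_equiv_sym: "window_equiv m D E \<Longrightarrow> window_equiv m E D"
  unfolding window_equiv_def by blast

lemma window_equiv_empty_iff:
  assumes "window_equiv m D E"
  shows "D = {} \<longleftrightarrow> E = {}"
proof -
  have "D - {0..<int m} = E - {0..<int m}"
    using assms unfolding window_equiv_def by auto
  then show ?thesis using assms unfolding window_equiv_def by blast
qed

lemma window_equiv_finite:
  assumes "window_equiv m D E" and "finite D"
  shows "finite E"
proof -
  have "E \<subseteq> D \<union> {0..<int m}"
    using assms(1) unfolding window_equiv_def by force
  then show ?thesis using assms(2) by (simp add: finite_subset)
qed

lemma window_equiv_Min_le:
  assumes equiv: "window_equiv m D E" and "finite D" and "E \<noteq> {}"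
  shows "Min D \<le> Min E + int m"
proof -
  have "finite E" using window_equiv_finite[OF equiv] \<open>finite D\<close> .
  then have Min_E: "Min E \<in> E" using \<open>E \<noteq> {}\<close> by simp
  show ?thesis
  proof (cases "Min E < 0 \<or> int m \<le> Min E")
    case True
    then have "Min E \<in> D" using equiv Min_E unfolding window_equiv_def by blast
    then show ?thesis using \<open>finite D\<close> by (simp add: add_increasing2)
  next
    case False
    then have "E \<inter> {0..<int m} \<noteq> {}" using Min_E by auto
    then obtain k where "k \<in> D" "k < int m"
      using equiv unfolding window_equiv_def by auto
    moreover have "Min D \<le> k" using \<open>finite D\<close> \<open>k \<in> D\<close> by simp
    ultimately show ?thesis using False by linarith
  qed
qed

lemma window_equiv_Max_le:
  assumes equiv: "window_equiv m D E" and "finite D" and "E \<noteq> {}"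
  shows "Max E \<le> Max D + int m"
proof -
  have "finite E" using window_equiv_finite[OF equiv] \<open>finite D\<close> .
  then have Max_E: "Max E \<in> E" using \<open>E \<noteq> {}\<close> by simp
  show ?thesis
  proof (cases "Max E < 0 \<or> int m \<le> Max E")
    case True
    then have "Max E \<in> D" using equiv Max_E unfolding window_equiv_def by blast
    then show ?thesis using \<open>finite D\<close> by (simp add: add_increasing2 trans_le_add1)
  next
    case False
    then have "E \<inter> {0..<int m} \<noteq> {}" using Max_E by auto
    then obtain k where "k \<in> D" "0 \<le> k"
      using equiv unfolding window_equiv_def by auto
    moreover have "k \<le> Max D" using \<open>finite D\<close> \<open>k \<in> D\<close> by simp
    ultimately show ?thesis using False by linarith
  qed
qed

lemma d_l_le_if_window_equiv:
  assumes equiv: "window_equiv m {i. p i \<noteq> q i} {i. p' i \<noteq> q' i}"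
    and fin: "finite {i. p i \<noteq> q i}"
  shows "d_l p' q' \<le> 2 ^ m * d_l p q"
proof (cases "p = q")
  case True
  then have "p' = q'" using window_equiv_empty_iff[OF equiv] by auto
  then show ?thesis using True by (simp add: d_l_def)
next
  case False
  let ?D = "{i. p i \<noteq> q i}" and ?E = "{i. p' i \<noteq> q' i}"
  have "p' \<noteq> q'" using False window_equiv_empty_iff[OF equiv] by auto
  then have "?E \<noteq> {}" by auto
  then have shift: "Min ?D \<le> Min ?E + int m" using window_equiv_Min_le[OF equiv fin] by blast
  have "d_l p' q' = 2 powi (- Min ?E)" using \<open>p' \<noteq> q'\<close> by (simp add: d_l_def)
  also have "\<dots> \<le> 2 powi (int m + - Min ?D)"
    by (rule power_int_increasing) (use shift in auto)
  also have "\<dots> = 2 ^ m * d_l p q"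
    using False power_int_add[of "2::real" "int m" "- Min ?D"] by (simp add: d_l_def)
  finally show ?thesis .
qed

lemma d_u_le_if_window_equiv:
  assumes equiv: "window_equiv m {i. p i \<noteq> q i} {i. p' i \<noteq> q' i}"
    and fin: "finite {i. p i \<noteq> q i}"
  shows "d_u p' q' \<le> 2 ^ m * d_u p q"
proof (cases "p = q")
  case True
  then have "p' = q'" using window_equiv_empty_iff[OF equiv] by auto
  then show ?thesis using True by (simp add: d_u_def)
next
  case False
  let ?D = "{i. p i \<noteq> q i}" and ?E = "{i. p' i \<noteq> q' i}"
  have "p' \<noteq> q'" using False window_equiv_empty_iff[OF equiv] by auto
  then have "?E \<noteq> {}" by auto
  then have shift: "Max ?E \<le> Max ?D + int m" using window_equiv_Max_le[OF equiv fin] by blast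
  have "d_u p' q' = 2 powi (Max ?E)" using \<open>p' \<noteq> q'\<close> by (simp add: d_u_def)
  also have "\<dots> \<le> 2 powi (int m + Max ?D)"
    by (rule power_int_increasing) (use shift in auto)
  also have "\<dots> = 2 ^ m * d_u p q" using False by (simp add: d_u_def power_int_add)
  finally show ?thesis .
qed

lemma finite_diff_if_in_B: "p \<in> B \<Longrightarrow> q \<in> B \<Longrightarrow> finite {i. p i \<noteq> q i}"
  unfolding B_def by (rule finite_subset[of _ "{i. p i} \<union> {i. q i}"]) auto

definition block :: "nat \<Rightarrow> (int \<Rightarrow> bool) \<Rightarrow> bool list" where
  "block m x = map (\<lambda>j. x (int j)) [0..<m]"

lemma nth_block:
  assumes "0 \<le> i" and "i < int m"
  shows "block m x ! nat i = x i"
proof -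
  have "nat i < m" using assms by linarith
  then show ?thesis using assms(1) by (simp add: block_def)
qed

lemma block_eq_iff: "block m p = block m q \<longleftrightarrow> (\<forall>i. 0 \<le> i \<and> i < int m \<longrightarrow> p i = q i)"
proof
  assume "block m p = block m q"
  then show "\<forall>i. 0 \<le> i \<and> i < int m \<longrightarrow> p i = q i" by (metis nth_block)
next
  assume "\<forall>i. 0 \<le> i \<and> i < int m \<longrightarrow> p i = q i"
  then show "block m p = block m q" by (simp add: block_def)
qed

lemma psi_outside_window: "i < 0 \<or> int m \<le> i \<Longrightarrow> psi m \<pi> x i = x i"
  by (auto simp: psi_def)

lemma psi_inside_window: "0 \<le> i \<Longrightarrow> i < int m \<Longrightarrow> psi m \<pi> x i = \<pi> (block m x) ! nat i"
  by (simp add: psi_def block_def)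

lemma length_permutes_S: "\<pi> permutes S m \<Longrightarrow> length xs = m \<Longrightarrow> length (\<pi> xs) = m"
  using permutes_in_image[of \<pi> "S m" xs] by (simp add: S_def)

lemma block_psi: "\<pi> permutes S m \<Longrightarrow> block m (psi m \<pi> x) = \<pi> (block m x)"
  by (rule nth_equalityI) (auto simp: length_permutes_S block_def psi_def)

lemma psi_inv_psi:
  assumes perm: "\<pi> permutes S m"
  shows "psi m (inv \<pi>) (psi m \<pi> x) = x"
proof
  fix i
  show "psi m (inv \<pi>) (psi m \<pi> x) i = x i"
  proof (cases "0 \<le> i \<and> i < int m")
    case True
    have "inv \<pi> (block m (psi m \<pi> x)) = block m x"
      by (simp add: block_psi[OF perm] permutes_inverses(2)[OF perm])
    then show ?thesis using True by (simp add: psi_inside_window nth_block)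
  qed (auto simp: psi_outside_window)
qed

lemma psi_psi_inv: "\<pi> permutes S m \<Longrightarrow> psi m \<pi> (psi m (inv \<pi>) x) = x"
  using psi_inv_psi[OF permutes_inv] by (simp add: inv_inv_eq permutes_bij)

lemma psi_in_B: "x \<in> B \<Longrightarrow> psi m \<pi> x \<in> B"
proof -
  assume "x \<in> B"
  have "{i. psi m \<pi> x i} \<subseteq> {i. x i} \<union> {0..<int m}" by (auto simp: psi_def)
  then show ?thesis using \<open>x \<in> B\<close> unfolding B_def by (auto intro: finite_subset)
qed

lemma bij_betw_psi_B: "\<pi> permutes S m \<Longrightarrow> bij_betw (psi m \<pi>) B B"
  by (rule bij_betwI[where g = "psi m (inv \<pi>)"])
    (auto simp: psi_in_B psi_inv_psi psi_psi_inv)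

lemma window_equiv_psi:
  assumes perm: "\<pi> permutes S m"
  shows "window_equiv m {i. p i \<noteq> q i} {i. psi m \<pi> p i \<noteq> psi m \<pi> q i}"
proof -
  have "block m (psi m \<pi> p) = block m (psi m \<pi> q) \<longleftrightarrow> block m p = block m q"
    using block_psi[OF perm] permutes_inj[OF perm] by (simp add: inj_eq)
  then show ?thesis
    unfolding window_equiv_def block_eq_iff by (auto simp: psi_outside_window)
qed

lemma boundary_metric_le_if_window_equiv:
  assumes "d \<in> {d_l, d_u}"
    and "window_equiv m {i. p i \<noteq> q i} {i. p' i \<noteq> q' i}" and "finite {i. p i \<noteq> q i}"
  shows "d p' q' \<le> 2 ^ m * d p q"
  using assms d_l_le_if_window_equiv d_u_le_if_window_equiv by blast

theorem mainTheorem6: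
  fixes m :: nat and \<pi> :: "bool list \<Rightarrow> bool list"
  assumes "m \<ge> 1" and "\<pi> permutes S m"
  shows "bij_betw (psi m \<pi>) B B \<and>
    (\<forall>d \<in> {d_l, d_u}. \<forall>p \<in> B. \<forall>q \<in> B.
       (1 / 2 ^ m) * d p q \<le> d (psi m \<pi> p) (psi m \<pi> q) \<and>
       d (psi m \<pi> p) (psi m \<pi> q) \<le> 2 ^ m * d p q)"
proof -
  have "(1 / 2 ^ m) * d p q \<le> d (psi m \<pi> p) (psi m \<pi> q) \<and>
        d (psi m \<pi> p) (psi m \<pi> q) \<le> 2 ^ m * d p q"
    if d: "d \<in> {d_l, d_u}" and "p \<in> B" "q \<in> B" for d p q
  proof -
    have equiv: "window_equiv m {i. p i \<noteq> q i} {i. psi m \<pi> p i \<noteq> psi m \<pi> q i}"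
      using window_equiv_psi[OF assms(2)] .
    have fin: "finite {i. p i \<noteq> q i}" "finite {i. psi m \<pi> p i \<noteq> psi m \<pi> q i}"
      using \<open>p \<in> B\<close> \<open>q \<in> B\<close> by (blast intro: finite_diff_if_in_B psi_in_B)+
    have "d p q \<le> 2 ^ m * d (psi m \<pi> p) (psi m \<pi> q)"
      using boundary_metric_le_if_window_equiv[OF d window_equiv_sym[OF equiv] fin(2)] .
    then show ?thesis
      using boundary_metric_le_if_window_equiv[OF d equiv fin(1)] by (simp add: field_simps)
  qed
  then show ?thesis using bij_betw_psi_B[OF assms(2)] by blast
qed

end
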